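(* Let $m\geq1$ and $n\geq2$. Then the identities satisfied by the semigroup $\mathbb{Z}_m\times N_n^I\times L_2^I\times R_2^I\times A_0^I$ are axiomatized by \[x^{m+n}\approx x^n,\quad x^{m+n-1}yx\approx x^{n-1}yx,\quad x^2yx\approx xyx^2,\quad xyxzx\approx x^2yzx.\]
   Context: $\mathbb{Z}_m$ is the cyclic group of order $m$; $N_n=\langle a\mid a^n=0\rangle$ is the monogenic nilpotent semigroup of order $n$; $L_2$ and $R_2$ are the left zero ($xy=x$) and right zero ($xy=y$) semigroups of order two; $A_0=\langle e,f\mid e^2=e,\ f^2=f,\ ef=0\rangle=\{0,e,f,fe\}$. For a semigroup $S$, $S^I$ is $S$ with an external identity element adjoined. Identities are between words over a countably infinite alphabet of variables. *)

theory Defs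
  imports Main
begin

text \<open>Words over the countably infinite alphabet of variables (indexed by nat)
  are nonempty lists; multiplication in the free semigroup is concatenation.\<close>

type_synonym word = "nat list"

fun evalw :: "('a \<Rightarrow> 'a \<Rightarrow> 'a) \<Rightarrow> (nat \<Rightarrow> 'a) \<Rightarrow> word \<Rightarrow> 'a" where
  "evalw mult \<phi> (x # xs) = foldl (\<lambda>a y. mult a (\<phi> y)) (\<phi> x) xs"
| "evalw mult \<phi> [] = undefined"

definition satisfies :: "'a set \<Rightarrow> ('a \<Rightarrow> 'a \<Rightarrow> 'a) \<Rightarrow> word \<Rightarrow> word \<Rightarrow> bool" where
  "satisfies S mult u v \<longleftrightarrow>
     (\<forall>\<phi>. (\<forall>x. \<phi> x \<in> S) \<longrightarrow> evalw mult \<phi> u = evalw mult \<phi> v)"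

definition substw :: "(nat \<Rightarrow> word) \<Rightarrow> word \<Rightarrow> word" where
  "substw \<sigma> w = concat (map \<sigma> w)"

inductive derivable :: "(word \<times> word) set \<Rightarrow> word \<Rightarrow> word \<Rightarrow> bool" for Sigma where
  ax: "(u, v) \<in> Sigma \<Longrightarrow> derivable Sigma u v"
| refl: "u \<noteq> [] \<Longrightarrow> derivable Sigma u u"
| sym: "derivable Sigma u v \<Longrightarrow> derivable Sigma v u"
| trans: "derivable Sigma u v \<Longrightarrow> derivable Sigma v w \<Longrightarrow> derivable Sigma u w"
| subst: "derivable Sigma u v \<Longrightarrow> (\<forall>x. \<sigma> x \<noteq> []) \<Longrightarrow>
            derivable Sigma (substw \<sigma> u) (substw \<sigma> v)"
| multl: "derivable Sigma u v \<Longrightarrow> w \<noteq> [] \<Longrightarrow> derivable Sigma (w @ u) (w @ v)"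
| multr: "derivable Sigma u v \<Longrightarrow> w \<noteq> [] \<Longrightarrow> derivable Sigma (u @ w) (v @ w)"

definition Zm_mult :: "nat \<Rightarrow> nat \<Rightarrow> nat \<Rightarrow> nat" where
  "Zm_mult m a b = (a + b) mod m"

text \<open>N_n^I: element k (1 \<le> k < n) is a^k, element n is the zero 0 = a^n,
  and element 0 is the adjoined identity I.  Hence the product is min (i+j) n.\<close>
definition NnI_mult :: "nat \<Rightarrow> nat \<Rightarrow> nat \<Rightarrow> nat" where
  "NnI_mult n i j = min (i + j) n"

text \<open>L_2^I and R_2^I on bool option; None is the adjoined identity.\<close>
fun L2I_mult :: "bool option \<Rightarrow> bool option \<Rightarrow> bool option" where
  "L2I_mult None y = y"
| "L2I_mult x None = x"
| "L2I_mult (Some a) (Some b) = Some a"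

fun R2I_mult :: "bool option \<Rightarrow> bool option \<Rightarrow> bool option" where
  "R2I_mult None y = y"
| "R2I_mult x None = x"
| "R2I_mult (Some a) (Some b) = Some b"

text \<open>A_0 = <e,f | e^2=e, f^2=f, ef=0> = {0,e,f,fe}, with identity I adjoined.\<close>
datatype A0I = Z0 | E | F | FE | I

fun A0I_mult :: "A0I \<Rightarrow> A0I \<Rightarrow> A0I" where
  "A0I_mult I y = y"
| "A0I_mult x I = x"
| "A0I_mult Z0 y = Z0"
| "A0I_mult x Z0 = Z0"
| "A0I_mult E E = E"
| "A0I_mult E F = Z0"
| "A0I_mult E FE = Z0"
| "A0I_mult F E = FE"
| "A0I_mult F F = F"
| "A0I_mult F FE = FE"
| "A0I_mult FE E = FE"
| "A0I_mult FE F = Z0"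
| "A0I_mult FE FE = Z0"

type_synonym elt = "nat \<times> nat \<times> bool option \<times> bool option \<times> A0I"

definition prod_carrier :: "nat \<Rightarrow> nat \<Rightarrow> elt set" where
  "prod_carrier m n = {0..<m} \<times> {0..n} \<times> UNIV \<times> UNIV \<times> UNIV"

definition prod_mult :: "nat \<Rightarrow> nat \<Rightarrow> elt \<Rightarrow> elt \<Rightarrow> elt" where
  "prod_mult m n = (\<lambda>(a1, b1, c1, d1, e1) (a2, b2, c2, d2, e2).
     (Zm_mult m a1 a2, NnI_mult n b1 b2, L2I_mult c1 c2, R2I_mult d1 d2, A0I_mult e1 e2))"

section \<open>The identities (variables x = 0, y = 1, z = 2)\<close>

definition Sigma_mn :: "nat \<Rightarrow> nat \<Rightarrow> (word \<times> word) set" where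
  "Sigma_mn m n =
    {(replicate (m + n) 0, replicate n 0),
     (replicate (m + n - 1) 0 @ [1, 0], replicate (n - 1) 0 @ [1, 0]),
     ([0, 0, 1, 0], [0, 1, 0, 0]),
     ([0, 1, 0, 2, 0], [0, 0, 1, 2, 0])}"

end

theory Submission
  imports Defs
begin

text \<open>Soundness: equational deduction preserves satisfaction, and each factor satisfies the four
  identities (\<open>\<int>\<^sub>m\<close> and \<open>N\<^sub>n\<^sup>I\<close> because they only see letter counts modulo \<open>m\<close> and up to \<open>n\<close>,
  the other three by a finite check).

  Completeness: if \<open>u \<approx> v\<close> holds in the product, then \<open>u\<close> and \<open>v\<close> have the same letter counts
  modulo \<open>m\<close> and up to \<open>n\<close> (from \<open>\<int>\<^sub>m\<close> and \<open>N\<^sub>n\<^sup>I\<close>), and for any two letters \<open>x \<noteq> y\<close> the same first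
  and last letter among \<open>x, y\<close> (from \<open>L\<^sub>2\<^sup>I\<close> and \<open>R\<^sub>2\<^sup>I\<close>) and the same answer to whether some \<open>y\<close>
  precedes some \<open>x\<close> (from \<open>A\<^sub>0\<^sup>I\<close> under \<open>x \<mapsto> f, y \<mapsto> e\<close>).  The identities \<open>x\<^sup>2yx \<approx> xyx\<^sup>2\<close> and
  \<open>xyxzx \<approx> x\<^sup>2yzx\<close> collect all occurrences of a repeated letter into a power at its first
  occurrence plus a single copy at its last one, and the first two identities bring that exponent
  into the range below \<open>m + n\<close>.  The resulting normal form is determined by the invariants above,
  which is seen by comparing its restrictions to all pairs of letters.\<close>

lemma foldl_hom:
  assumes "\<And>a b. h (f a b) = f' (h a) (h b)"
  shows "h (foldl (\<lambda>a y. f a (\<phi> y)) acc xs) = foldl (\<lambda>a y. f' a (h (\<phi> y))) (h acc) xs"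
  by (induction xs arbitrary: acc) (simp_all add: assms)

lemma evalw_hom:
  assumes "\<And>a b. h (f a b) = f' (h a) (h b)" and "w \<noteq> []"
  shows "h (evalw f \<phi> w) = evalw f' (h \<circ> \<phi>) w"
  using assms(2) by (cases w) (simp_all add: comp_def, rule foldl_hom, rule assms(1))

lemma evalw_snoc: "w \<noteq> [] \<Longrightarrow> evalw f \<phi> (w @ [a]) = f (evalw f \<phi> w) (\<phi> a)"
  by (cases w) auto

lemma foldl_assoc:
  assumes "\<And>a b c. f (f a b) c = f a (f b c)"
  shows "foldl (\<lambda>a y. f a (\<phi> y)) (f b c) xs = f b (foldl (\<lambda>a y. f a (\<phi> y)) c xs)"
  by (induction xs arbitrary: c) (simp_all add: assms)

lemma evalw_append:
  assumes "\<And>a b c. f (f a b) c = f a (f b c)" and "u \<noteq> []" and "v \<noteq> []"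
  shows "evalw f \<phi> (u @ v) = f (evalw f \<phi> u) (evalw f \<phi> v)"
  using assms(2,3) by (cases u; cases v) (simp_all add: foldl_assoc[OF assms(1)])

lemma evalw_substw:
  assumes "\<And>a b c. f (f a b) c = f a (f b c)" and "\<forall>x. \<sigma> x \<noteq> []" and "u \<noteq> []"
  shows "evalw f \<phi> (substw \<sigma> u) = evalw f (\<lambda>x. evalw f \<phi> (\<sigma> x)) u"
  using assms(3)
proof (induction u rule: list_nonempty_induct)
  case (single x)
  then show ?case by (simp add: substw_def)
next
  case (cons x xs)
  have "substw \<sigma> xs \<noteq> []"
    using cons.hyps assms(2) by (cases xs) (auto simp: substw_def)
  then have "evalw f \<phi> (substw \<sigma> (x # xs)) = f (evalw f \<phi> (\<sigma> x)) (evalw f \<phi> (substw \<sigma> xs))"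
    using evalw_append[OF assms(1)] assms(2) by (simp add: substw_def)
  also have "\<dots> = evalw f (\<lambda>x. evalw f \<phi> (\<sigma> x)) ([x] @ xs)"
    using cons evalw_append[OF assms(1), of "[x]" xs "\<lambda>x. evalw f \<phi> (\<sigma> x)"] by simp
  finally show ?case by simp
qed

lemma evalw_closed:
  assumes "\<And>a b. a \<in> S \<Longrightarrow> b \<in> S \<Longrightarrow> f a b \<in> S" and "\<forall>x. \<phi> x \<in> S" and "w \<noteq> []"
  shows "evalw f \<phi> w \<in> S"
proof -
  have "foldl (\<lambda>a y. f a (\<phi> y)) acc xs \<in> S" if "acc \<in> S" for acc xs
    using that by (induction xs arbitrary: acc) (simp_all add: assms(1,2))
  then show ?thesis using assms(2,3) by (cases w) auto
qed

lemma evalw_replicate: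
  assumes "\<And>a. f (f a a) a = f a a" and "2 \<le> k"
  shows "evalw f \<phi> (replicate k x) = f (\<phi> x) (\<phi> x)"
proof -
  have "foldl (\<lambda>a y. f a (\<phi> y)) (f (\<phi> x) (\<phi> x)) (replicate j x) = f (\<phi> x) (\<phi> x)" for j
    by (induction j) (simp_all add: assms(1))
  moreover obtain j where "k = Suc (Suc j)"
    using assms(2) by (metis add_2_eq_Suc le_Suc_ex)
  ultimately show ?thesis by simp
qed

lemma evalw_replicate_snoc2:
  assumes "\<And>a. f (f a a) a = f a a" and "\<And>a b. f (f (f a a) b) a = f (f a b) a" and "1 \<le> k"
  shows "evalw f \<phi> (replicate k x @ [y, x]) = f (f (\<phi> x) (\<phi> y)) (\<phi> x)"
proof (cases "k = 1")
  case False
  then have "evalw f \<phi> (replicate k x) = f (\<phi> x) (\<phi> x)"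
    using evalw_replicate[OF assms(1)] assms(3) by simp
  then show ?thesis
    using evalw_snoc[of "replicate k x @ [y]" f \<phi> x] evalw_snoc[of "replicate k x" f \<phi> y] assms(2,3)
    by simp
qed simp

lemma derivable_nonempty:
  assumes "derivable Ax u v" and "\<forall>(a, b) \<in> Ax. a \<noteq> [] \<and> b \<noteq> []"
  shows "u \<noteq> [] \<and> v \<noteq> []"
  using assms
proof (induction rule: derivable.induct)
  case (subst u v \<sigma>)
  then show ?case by (cases u; cases v) (auto simp: substw_def)
qed auto

lemma satisfies_if_derivable:
  assumes assoc: "\<And>a b c. f (f a b) c = f a (f b c)"
    and closed: "\<And>a b. a \<in> S \<Longrightarrow> b \<in> S \<Longrightarrow> f a b \<in> S"
    and axioms: "\<forall>(a, b) \<in> Ax. a \<noteq> [] \<and> b \<noteq> [] \<and> satisfies S f a b"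
    and "derivable Ax u v"
  shows "satisfies S f u v"
  using assms(4)
proof (induction rule: derivable.induct)
  case (ax u v)
  then show ?case using axioms by auto
next
  case (subst u v \<sigma>)
  have "u \<noteq> [] \<and> v \<noteq> []"
    using derivable_nonempty[OF subst.hyps(1)] axioms by auto
  moreover have "\<forall>x. evalw f \<phi> (\<sigma> x) \<in> S" if "\<forall>x. \<phi> x \<in> S" for \<phi>
    using evalw_closed[OF closed that] subst.hyps(2) by auto
  ultimately show ?case
    using subst.IH subst.hyps(2) by (simp add: satisfies_def evalw_substw[OF assoc])
next
  case (multl u v w)
  have "u \<noteq> [] \<and> v \<noteq> []"
    using derivable_nonempty[OF multl.hyps(1)] axioms by auto
  with multl show ?case by (simp add: satisfies_def evalw_append[OF assoc])
next
  case (multr u v w)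
  have "u \<noteq> [] \<and> v \<noteq> []"
    using derivable_nonempty[OF multr.hyps(1)] axioms by auto
  with multr show ?case by (simp add: satisfies_def evalw_append[OF assoc])
qed (simp_all add: satisfies_def)

definition prod_op :: "('a \<Rightarrow> 'a \<Rightarrow> 'a) \<Rightarrow> ('b \<Rightarrow> 'b \<Rightarrow> 'b) \<Rightarrow> 'a \<times> 'b \<Rightarrow> 'a \<times> 'b \<Rightarrow> 'a \<times> 'b"
  where "prod_op f g p q = (f (fst p) (fst q), g (snd p) (snd q))"

lemma evalw_prod_op:
  "w \<noteq> [] \<Longrightarrow> evalw (prod_op f g) \<phi> w = (evalw f (fst \<circ> \<phi>) w, evalw g (snd \<circ> \<phi>) w)"
  using evalw_hom[of fst "prod_op f g" f w \<phi>] evalw_hom[of snd "prod_op f g" g w \<phi>]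
  by (simp add: prod_op_def prod_eq_iff)

lemma satisfies_prod_op:
  assumes "A \<noteq> {}" and "B \<noteq> {}" and "u \<noteq> []" and "v \<noteq> []"
  shows "satisfies (A \<times> B) (prod_op f g) u v \<longleftrightarrow> satisfies A f u v \<and> satisfies B g u v"
proof safe
  assume prod: "satisfies (A \<times> B) (prod_op f g) u v"
  obtain a b where "a \<in> A" "b \<in> B" using assms(1,2) by blast
  show "satisfies A f u v" unfolding satisfies_def
  proof (intro allI impI)
    fix \<phi> :: "nat \<Rightarrow> _" assume "\<forall>x. \<phi> x \<in> A"
    then have "evalw (prod_op f g) (\<lambda>x. (\<phi> x, b)) u = evalw (prod_op f g) (\<lambda>x. (\<phi> x, b)) v"
      using prod \<open>b \<in> B\<close> by (simp add: satisfies_def)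
    then show "evalw f \<phi> u = evalw f \<phi> v"
      using assms(3,4) by (simp add: evalw_prod_op comp_def)
  qed
  show "satisfies B g u v" unfolding satisfies_def
  proof (intro allI impI)
    fix \<phi> :: "nat \<Rightarrow> _" assume "\<forall>x. \<phi> x \<in> B"
    then have "evalw (prod_op f g) (\<lambda>x. (a, \<phi> x)) u = evalw (prod_op f g) (\<lambda>x. (a, \<phi> x)) v"
      using prod \<open>a \<in> A\<close> by (simp add: satisfies_def)
    then show "evalw g \<phi> u = evalw g \<phi> v"
      using assms(3,4) by (simp add: evalw_prod_op comp_def)
  qed
next
  assume "satisfies A f u v" and "satisfies B g u v"
  then show "satisfies (A \<times> B) (prod_op f g) u v"
    using assms(3,4) by (auto simp: satisfies_def evalw_prod_op mem_Times_iff)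
qed

lemma prod_mult_eq:
  "prod_mult m n = prod_op (Zm_mult m) (prod_op (NnI_mult n) (prod_op L2I_mult (prod_op R2I_mult A0I_mult)))"
  by (simp add: fun_eq_iff prod_mult_def prod_op_def split_beta)

lemma satisfies_prod_carrier_iff:
  assumes "1 \<le> m" and "u \<noteq> []" and "v \<noteq> []"
  shows "satisfies (prod_carrier m n) (prod_mult m n) u v \<longleftrightarrow>
    satisfies {0..<m} (Zm_mult m) u v \<and> satisfies {0..n} (NnI_mult n) u v \<and>
    satisfies UNIV L2I_mult u v \<and> satisfies UNIV R2I_mult u v \<and> satisfies UNIV A0I_mult u v"
  using assms by (simp add: prod_carrier_def prod_mult_eq satisfies_prod_op del: UNIV_Times_UNIV)

lemma sum_list_map_indicator: "sum_list (map (\<lambda>z. if z = x then k else 0) w) = count_list w x * k"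
  by (induction w) auto

lemma count_list_replicate: "count_list (replicate k a) x = (if a = x then k else 0)"
  by (induction k) auto

lemma foldl_Zm_mult:
  "foldl (\<lambda>a y. Zm_mult m a (\<psi> y)) acc xs = (if xs = [] then acc else (acc + sum_list (map \<psi> xs)) mod m)"
  by (induction xs arbitrary: acc) (auto simp: Zm_mult_def mod_add_left_eq add.assoc)

lemma evalw_Zm_mult:
  "(\<And>z. \<psi> z < m) \<Longrightarrow> w \<noteq> [] \<Longrightarrow> evalw (Zm_mult m) \<psi> w = sum_list (map \<psi> w) mod m"
  by (cases w) (auto simp: foldl_Zm_mult)

lemma Zm_satisfies_iff:
  assumes "1 \<le> m" and "u \<noteq> []" and "v \<noteq> []"
  shows "satisfies {0..<m} (Zm_mult m) u v \<longleftrightarrow> (\<forall>x. count_list u x mod m = count_list v x mod m)"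
proof
  assume sat: "satisfies {0..<m} (Zm_mult m) u v"
  show "\<forall>x. count_list u x mod m = count_list v x mod m"
  proof (cases "m = 1")
    case False
    show ?thesis
    proof
      fix x :: nat
      let ?\<psi> = "\<lambda>z :: nat. if z = x then 1 else 0 :: nat"
      have "evalw (Zm_mult m) ?\<psi> u = evalw (Zm_mult m) ?\<psi> v"
        using sat assms(1) False by (simp add: satisfies_def)
      then show "count_list u x mod m = count_list v x mod m"
        using assms False by (simp add: evalw_Zm_mult sum_list_map_indicator)
    qed
  qed simp
next
  assume counts: "\<forall>x. count_list u x mod m = count_list v x mod m"
  have sum_mod: "sum_list (map \<psi> w) mod m =
      (\<Sum>x \<in> set u \<union> set v. count_list w x mod m * \<psi> x mod m) mod m"
    if "w = u \<or> w = v" for w and \<psi> :: "nat \<Rightarrow> nat"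
  proof -
    have "sum_list (map \<psi> w) = (\<Sum>x \<in> set u \<union> set v. count_list w x * \<psi> x)"
      using that sum_list_map_eq_sum_count2[of w "set u \<union> set v"] by auto
    then show ?thesis by (simp add: mod_sum_eq mod_mult_left_eq)
  qed
  show "satisfies {0..<m} (Zm_mult m) u v"
    unfolding satisfies_def
    using counts assms(2,3) by (auto simp: evalw_Zm_mult sum_mod[of u] sum_mod[of v])
qed

lemma foldl_NnI_mult:
  "foldl (\<lambda>a y. NnI_mult n a (\<psi> y)) acc xs = (if xs = [] then acc else min (acc + sum_list (map \<psi> xs)) n)"
  by (induction xs arbitrary: acc) (auto simp: NnI_mult_def min_def)

lemma evalw_NnI_mult:
  "(\<And>z. \<psi> z \<le> n) \<Longrightarrow> w \<noteq> [] \<Longrightarrow> evalw (NnI_mult n) \<psi> w = min (sum_list (map \<psi> w)) n"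
  by (cases w) (auto simp: foldl_NnI_mult min_def)

lemma min_sum_cap:
  fixes f :: "'a \<Rightarrow> nat"
  shows "finite X \<Longrightarrow> min (\<Sum>x\<in>X. f x) n = min (\<Sum>x\<in>X. min (f x) n) n"
proof (induction X rule: finite_induct)
  case (insert x F)
  have cap: "min (a + b) n = min (min a n + min b n) n" for a b :: nat
    by (simp add: min_def)
  show ?case
    using insert cap[of "f x" "sum f F"] cap[of "min (f x) n" "\<Sum>x\<in>F. min (f x) n"] by simp
qed simp

lemma min_mult_cap: "min (a * b) n = min (min a n * b) (n :: nat)"
  by (cases b) (auto simp: min_def)

lemma NnI_satisfies_iff:
  assumes "1 \<le> n" and "u \<noteq> []" and "v \<noteq> []"
  shows "satisfies {0..n} (NnI_mult n) u v \<longleftrightarrow> (\<forall>x. min (count_list u x) n = min (count_list v x) n)"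
proof
  assume sat: "satisfies {0..n} (NnI_mult n) u v"
  show "\<forall>x. min (count_list u x) n = min (count_list v x) n"
  proof
    fix x :: nat
    let ?\<psi> = "\<lambda>z :: nat. if z = x then 1 else 0 :: nat"
    have "evalw (NnI_mult n) ?\<psi> u = evalw (NnI_mult n) ?\<psi> v"
      using sat assms(1) by (simp add: satisfies_def)
    then show "min (count_list u x) n = min (count_list v x) n"
      using assms by (simp add: evalw_NnI_mult sum_list_map_indicator)
  qed
next
  assume counts: "\<forall>x. min (count_list u x) n = min (count_list v x) n"
  have sum_min: "min (sum_list (map \<psi> w)) n =
      min (\<Sum>x \<in> set u \<union> set v. min (min (count_list w x) n * \<psi> x) n) n"
    if "w = u \<or> w = v" for w and \<psi> :: "nat \<Rightarrow> nat"
  proof -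
    have "min (sum_list (map \<psi> w)) n = min (\<Sum>x \<in> set u \<union> set v. count_list w x * \<psi> x) n"
      using that sum_list_map_eq_sum_count2[of w "set u \<union> set v"] by auto
    then show ?thesis by (subst (asm) min_sum_cap) (simp_all add: min_mult_cap[symmetric])
  qed
  show "satisfies {0..n} (NnI_mult n) u v"
    unfolding satisfies_def
    using counts assms(2,3) by (auto simp: evalw_NnI_mult sum_min[of u] sum_min[of v])
qed

lemma foldl_L2I_mult:
  "foldl (\<lambda>a y. L2I_mult a (\<psi> y)) acc xs =
    (if acc = None then (case filter (\<lambda>z. \<psi> z \<noteq> None) xs of [] \<Rightarrow> None | b # _ \<Rightarrow> \<psi> b) else acc)"
proof (induction xs arbitrary: acc)
  case (Cons y xs)
  have "L2I_mult (Some a) b = Some a" for a b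
    by (cases b) auto
  with Cons show ?case by (cases acc; cases "\<psi> y") auto
qed simp

lemma evalw_L2I_mult:
  "w \<noteq> [] \<Longrightarrow> evalw L2I_mult \<psi> w = (case filter (\<lambda>z. \<psi> z \<noteq> None) w of [] \<Rightarrow> None | b # _ \<Rightarrow> \<psi> b)"
  by (cases w) (auto simp: foldl_L2I_mult split: list.split)

lemma foldl_R2I_mult:
  "foldl (\<lambda>a y. R2I_mult a (\<psi> y)) acc xs =
    (if filter (\<lambda>z. \<psi> z \<noteq> None) xs = [] then acc else \<psi> (last (filter (\<lambda>z. \<psi> z \<noteq> None) xs)))"
proof (induction xs arbitrary: acc)
  case (Cons y xs)
  have "R2I_mult a None = a" "R2I_mult a (Some b) = Some b" for a b
    by (cases a; simp)+
  with Cons show ?case by (cases "\<psi> y") auto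
qed simp

lemma evalw_R2I_mult:
  "w \<noteq> [] \<Longrightarrow> evalw R2I_mult \<psi> w =
    (if filter (\<lambda>z. \<psi> z \<noteq> None) w = [] then None else \<psi> (last (filter (\<lambda>z. \<psi> z \<noteq> None) w)))"
  by (cases w) (auto simp: foldl_R2I_mult)

text \<open>Under the assignment \<open>x \<mapsto> Some True, y \<mapsto> Some False\<close> (all other letters to the identity),
  \<open>L\<^sub>2\<^sup>I\<close> reads off which of \<open>x, y\<close> occurs first and \<open>R\<^sub>2\<^sup>I\<close> which occurs last.\<close>

lemma L2I_satisfies_hd_filter:
  assumes "satisfies UNIV L2I_mult u v" and "u \<noteq> []" and "v \<noteq> []"
  shows "hd (filter (\<lambda>z. z = x \<or> z = y) u) = hd (filter (\<lambda>z. z = x \<or> z = y) v)"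
proof -
  define \<psi> where "\<psi> z = (if z = x then Some True else if z = y then Some False else None)" for z
  have filter_\<psi>: "filter (\<lambda>z. \<psi> z \<noteq> None) w = filter (\<lambda>z. z = x \<or> z = y) w" for w
    by (rule filter_cong) (auto simp: \<psi>_def)
  have "evalw L2I_mult \<psi> u = evalw L2I_mult \<psi> v"
    using assms(1) by (simp add: satisfies_def)
  then show ?thesis
    using assms(2,3) unfolding evalw_L2I_mult[OF assms(2)] evalw_L2I_mult[OF assms(3)] filter_\<psi>
    by (auto simp: \<psi>_def split: list.splits if_splits dest!: filter_eq_ConsD)
qed

lemma R2I_satisfies_last_filter:
  assumes "satisfies UNIV R2I_mult u v" and "u \<noteq> []" and "v \<noteq> []"
  shows "last (filter (\<lambda>z. z = x \<or> z = y) u) = last (filter (\<lambda>z. z = x \<or> z = y) v)"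
proof -
  define \<psi> where "\<psi> z = (if z = x then Some True else if z = y then Some False else None)" for z
  have filter_\<psi>: "filter (\<lambda>z. \<psi> z \<noteq> None) w = filter (\<lambda>z. z = x \<or> z = y) w" for w
    by (rule filter_cong) (auto simp: \<psi>_def)
  have last_in: "last (filter (\<lambda>z. z = x \<or> z = y) w) \<in> {x, y}" if "filter (\<lambda>z. z = x \<or> z = y) w \<noteq> []" for w
    using last_in_set[OF that] by auto
  have "evalw R2I_mult \<psi> u = evalw R2I_mult \<psi> v"
    using assms(1) by (simp add: satisfies_def)
  then show ?thesis
    using assms(2,3) last_in[of u] last_in[of v]
    unfolding evalw_R2I_mult[OF assms(2)] evalw_R2I_mult[OF assms(3)] filter_\<psi>
    by (auto simp: \<psi>_def split: if_splits)
qed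

fun occurs_before :: "nat \<Rightarrow> nat \<Rightarrow> word \<Rightarrow> bool" where
  "occurs_before y x [] = False"
| "occurs_before y x (a # w) = ((a = y \<and> x \<in> set w) \<or> occurs_before y x w)"

lemma occurs_before_append:
  "occurs_before y x (w @ w') \<longleftrightarrow> occurs_before y x w \<or> occurs_before y x w' \<or> (y \<in> set w \<and> x \<in> set w')"
  by (induction w) auto

lemma occurs_before_in_set: "occurs_before y x w \<Longrightarrow> x \<in> set w"
  by (induction w) auto

lemma not_occurs_before_replicate: "x \<noteq> y \<Longrightarrow> \<not> occurs_before y x (replicate k x)"
  by (induction k) auto

lemma occurs_before_filter: "P x \<Longrightarrow> P y \<Longrightarrow> occurs_before y x (filter P w) = occurs_before y x w"
  by (induction w) auto

text \<open>Every product of \<open>e\<close>'s and \<open>f\<close>'s in \<open>A\<^sub>0\<^sup>I\<close> is of this form: it is \<open>0\<close> iff some \<open>e\<close> precedes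
  some \<open>f\<close>, and otherwise it only depends on which of \<open>f, e\<close> occur.\<close>

definition A0I_of :: "bool \<Rightarrow> bool \<Rightarrow> bool \<Rightarrow> A0I" where
  "A0I_of zero has_f has_e =
    (if zero then Z0 else if has_f \<and> has_e then FE else if has_f then F else if has_e then E else I)"

lemma foldl_A0I_mult:
  assumes "x \<noteq> y"
  shows "foldl (\<lambda>a z. A0I_mult a (if z = x then F else if z = y then E else I)) (A0I_of zero hf he) xs
    = A0I_of (zero \<or> occurs_before y x xs \<or> (he \<and> x \<in> set xs)) (hf \<or> x \<in> set xs) (he \<or> y \<in> set xs)"
proof (induction xs arbitrary: zero hf he)
  case (Cons z xs)
  have "A0I_mult (A0I_of zero hf he) (if z = x then F else if z = y then E else I)
     = A0I_of (zero \<or> (he \<and> z = x)) (hf \<or> z = x) (he \<or> z = y)"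
    using assms by (auto simp: A0I_of_def)
  then show ?case
    using assms by (simp only: foldl_Cons Cons) (auto intro!: arg_cong3[where f = A0I_of])
qed simp

lemma evalw_A0I_mult_eq_zero:
  assumes "x \<noteq> y" and "w \<noteq> []"
  shows "evalw A0I_mult (\<lambda>z. if z = x then F else if z = y then E else I) w = Z0 \<longleftrightarrow> occurs_before y x w"
proof -
  obtain z xs where w: "w = z # xs" using assms(2) by (cases w) auto
  have "(if z = x then F else if z = y then E else I) = A0I_of False (z = x) (z = y)"
    using assms by (auto simp: A0I_of_def)
  then have "evalw A0I_mult (\<lambda>z. if z = x then F else if z = y then E else I) w
     = A0I_of (occurs_before y x xs \<or> (z = y \<and> x \<in> set xs)) (z = x \<or> x \<in> set xs) (z = y \<or> y \<in> set xs)"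
    using w foldl_A0I_mult[OF assms(1)] by simp
  then show ?thesis
    using w by (auto simp: A0I_of_def)
qed

lemma A0I_satisfies_occurs_before:
  assumes "satisfies UNIV A0I_mult u v" and "u \<noteq> []" and "v \<noteq> []" and "x \<noteq> y"
  shows "occurs_before y x u \<longleftrightarrow> occurs_before y x v"
proof -
  have "evalw A0I_mult (\<lambda>z. if z = x then F else if z = y then E else I) u =
      evalw A0I_mult (\<lambda>z. if z = x then F else if z = y then E else I) v"
    using assms(1) by (simp add: satisfies_def)
  then show ?thesis
    using evalw_A0I_mult_eq_zero[OF assms(4,2)] evalw_A0I_mult_eq_zero[OF assms(4,3)] by simp
qed

section \<open>Soundness\<close>

lemma Sigma_mn_nonempty: "1 \<le> n \<Longrightarrow> \<forall>(u, v) \<in> Sigma_mn m n. u \<noteq> [] \<and> v \<noteq> []"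
  by (auto simp: Sigma_mn_def)

lemma Sigma_mn_counts:
  assumes "(u, v) \<in> Sigma_mn m n" and "1 \<le> n"
  shows "count_list u x mod m = count_list v x mod m \<and> min (count_list u x) n = min (count_list v x) n"
  using assms by (auto simp: Sigma_mn_def count_list_replicate)

lemma satisfies_if_derivable_Sigma_mn_identities:
  assumes "\<And>a b c. f (f a b) c = f a (f b c)"
    and "\<And>a. f (f a a) a = f a a"
    and "\<And>a b. f (f (f a a) b) a = f (f a b) a"
    and "\<And>a b. f (f (f a a) b) a = f (f (f a b) a) a"
    and "\<And>a b c. f (f (f (f a b) a) c) a = f (f (f (f a a) b) c) a"
    and "2 \<le> n" and "derivable (Sigma_mn m n) u v"
  shows "satisfies UNIV f u v"
proof (rule satisfies_if_derivable[OF assms(1) _ _ assms(7)])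
  have "satisfies UNIV f a b" if "(a, b) \<in> Sigma_mn m n" for a b
    using that assms(2-6) by (auto simp: Sigma_mn_def satisfies_def evalw_replicate evalw_replicate_snoc2)
  then show "\<forall>(a, b) \<in> Sigma_mn m n. a \<noteq> [] \<and> b \<noteq> [] \<and> satisfies UNIV f a b"
    using Sigma_mn_nonempty[of n m] assms(6) by auto
qed simp

lemma L2I_mult_identities:
  "L2I_mult (L2I_mult a b) c = L2I_mult a (L2I_mult b c)"
  "L2I_mult (L2I_mult a a) a = L2I_mult a a"
  "L2I_mult (L2I_mult (L2I_mult a a) b) a = L2I_mult (L2I_mult a b) a"
  "L2I_mult (L2I_mult (L2I_mult a a) b) a = L2I_mult (L2I_mult (L2I_mult a b) a) a"
  "L2I_mult (L2I_mult (L2I_mult (L2I_mult a b) a) c) a = L2I_mult (L2I_mult (L2I_mult (L2I_mult a a) b) c) a"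
  by (cases a; cases b; cases c; simp)+

lemma R2I_mult_identities:
  "R2I_mult (R2I_mult a b) c = R2I_mult a (R2I_mult b c)"
  "R2I_mult (R2I_mult a a) a = R2I_mult a a"
  "R2I_mult (R2I_mult (R2I_mult a a) b) a = R2I_mult (R2I_mult a b) a"
  "R2I_mult (R2I_mult (R2I_mult a a) b) a = R2I_mult (R2I_mult (R2I_mult a b) a) a"
  "R2I_mult (R2I_mult (R2I_mult (R2I_mult a b) a) c) a = R2I_mult (R2I_mult (R2I_mult (R2I_mult a a) b) c) a"
  by (cases a; cases b; cases c; simp)+

lemma A0I_mult_identities:
  "A0I_mult (A0I_mult a b) c = A0I_mult a (A0I_mult b c)"
  "A0I_mult (A0I_mult a a) a = A0I_mult a a"
  "A0I_mult (A0I_mult (A0I_mult a a) b) a = A0I_mult (A0I_mult a b) a"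
  "A0I_mult (A0I_mult (A0I_mult a a) b) a = A0I_mult (A0I_mult (A0I_mult a b) a) a"
  "A0I_mult (A0I_mult (A0I_mult (A0I_mult a b) a) c) a = A0I_mult (A0I_mult (A0I_mult (A0I_mult a a) b) c) a"
  by (cases a; cases b; cases c; simp)+

lemma Zm_mult_assoc: "Zm_mult m (Zm_mult m a b) c = Zm_mult m a (Zm_mult m b c)"
  by (simp add: Zm_mult_def mod_add_left_eq mod_add_right_eq add.assoc)

lemma NnI_mult_assoc: "NnI_mult n (NnI_mult n a b) c = NnI_mult n a (NnI_mult n b c)"
  by (simp add: NnI_mult_def min_def)

lemma satisfies_if_derivable_Sigma_mn_counts:
  assumes "\<And>a b c. f (f a b) c = f a (f b c)"
    and "\<And>a b. a \<in> S \<Longrightarrow> b \<in> S \<Longrightarrow> f a b \<in> S"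
    and "\<And>a b. a \<noteq> [] \<Longrightarrow> b \<noteq> [] \<Longrightarrow> \<forall>x. count_list a x mod m = count_list b x mod m \<Longrightarrow>
      \<forall>x. min (count_list a x) n = min (count_list b x) n \<Longrightarrow> satisfies S f a b"
    and "1 \<le> n" and "derivable (Sigma_mn m n) u v"
  shows "satisfies S f u v"
proof (rule satisfies_if_derivable[OF assms(1,2) _ assms(5)])
  have "satisfies S f a b" if "(a, b) \<in> Sigma_mn m n" for a b
    using that Sigma_mn_nonempty[of n m] Sigma_mn_counts[OF that assms(4)] assms(4) by (intro assms(3)) auto
  then show "\<forall>(a, b) \<in> Sigma_mn m n. a \<noteq> [] \<and> b \<noteq> [] \<and> satisfies S f a b"
    using Sigma_mn_nonempty[of n m] assms(4) by auto
qed

lemma satisfies_if_derivable_Sigma_mn: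
  assumes "1 \<le> m" and "2 \<le> n" and "derivable (Sigma_mn m n) u v"
  shows "satisfies (prod_carrier m n) (prod_mult m n) u v"
proof -
  have "satisfies {0..<m} (Zm_mult m) u v"
  proof (rule satisfies_if_derivable_Sigma_mn_counts[OF Zm_mult_assoc _ _ _ assms(3)])
    show "Zm_mult m a b \<in> {0..<m}" for a b
      using assms(1) by (simp add: Zm_mult_def)
  qed (use assms(1,2) Zm_satisfies_iff[OF assms(1)] in simp_all)
  moreover have "satisfies {0..n} (NnI_mult n) u v"
  proof (rule satisfies_if_derivable_Sigma_mn_counts[OF NnI_mult_assoc _ _ _ assms(3)])
    show "NnI_mult n a b \<in> {0..n}" for a b
      by (simp add: NnI_mult_def)
  qed (use assms(2) NnI_satisfies_iff[of n] in simp_all)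
  moreover have "satisfies UNIV L2I_mult u v"
    by (rule satisfies_if_derivable_Sigma_mn_identities[where f = L2I_mult, OF L2I_mult_identities assms(2,3)])
  moreover have "satisfies UNIV R2I_mult u v"
    by (rule satisfies_if_derivable_Sigma_mn_identities[where f = R2I_mult, OF R2I_mult_identities assms(2,3)])
  moreover have "satisfies UNIV A0I_mult u v"
    by (rule satisfies_if_derivable_Sigma_mn_identities[where f = A0I_mult, OF A0I_mult_identities assms(2,3)])
  moreover have "u \<noteq> [] \<and> v \<noteq> []"
    using derivable_nonempty[OF assms(3)] Sigma_mn_nonempty[of n m] assms(2) by simp
  ultimately show ?thesis
    using satisfies_prod_carrier_iff[OF assms(1)] by blast
qed

section \<open>Normal forms\<close>

text \<open>\<open>nf_seg c pre s post\<close> rewrites the segment \<open>s\<close> of the word \<open>pre @ s @ post\<close>: the first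
  occurrence of a letter \<open>b\<close> becomes \<open>b\<^bsup>c b - 1\<^esup>\<close>, its last occurrence is kept, occurrences in between
  are deleted, and a letter occurring only once is kept.  So \<open>nf_seg c [] w []\<close> contains \<open>b\<close> exactly
  \<open>c b\<close> times when \<open>b\<close> occurs at least twice in \<open>w\<close> and \<open>c b \<ge> 1\<close>.\<close>

definition nf_occ :: "(nat \<Rightarrow> nat) \<Rightarrow> nat \<Rightarrow> bool \<Rightarrow> bool \<Rightarrow> word" where
  "nf_occ c b seen later =
    (if seen then (if later then [] else [b]) else (if later then replicate (c b - 1) b else [b]))"

fun nf_seg :: "(nat \<Rightarrow> nat) \<Rightarrow> word \<Rightarrow> word \<Rightarrow> word \<Rightarrow> word" where
  "nf_seg c pre [] post = []"
| "nf_seg c pre (b # s) post = nf_occ c b (b \<in> set pre) (b \<in> set s \<or> b \<in> set post) @ nf_seg c (pre @ [b]) s post"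

lemma nf_seg_append: "nf_seg c pre (s @ s') post = nf_seg c pre s (s' @ post) @ nf_seg c (pre @ s) s' post"
  by (induction s arbitrary: pre) auto

lemma nf_seg_split_at:
  "nf_seg c pre (w1 @ a # w3) post = nf_seg c pre w1 (a # w3 @ post)
    @ nf_occ c a (a \<in> set pre \<or> a \<in> set w1) (a \<in> set w3 \<or> a \<in> set post) @ nf_seg c (pre @ w1 @ [a]) w3 post"
  by (simp add: nf_seg_append)

lemma nf_seg_split_at2:
  "nf_seg c pre (w1 @ a # w2 @ a # w3) post = nf_seg c pre w1 (a # w2 @ a # w3 @ post)
    @ nf_occ c a (a \<in> set pre \<or> a \<in> set w1) True @ nf_seg c (pre @ w1 @ [a]) w2 (a # w3 @ post)
    @ nf_occ c a True (a \<in> set w3 \<or> a \<in> set post) @ nf_seg c (pre @ w1 @ a # w2 @ [a]) w3 post"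
  using nf_seg_split_at[of c pre w1 a "w2 @ a # w3" post] nf_seg_split_at[of c "pre @ w1 @ [a]" w2 a w3 post]
  by simp

lemma nf_seg_cong:
  assumes "\<forall>b \<in> set s. b \<in> set pre \<longleftrightarrow> b \<in> set pre'"
    and "\<forall>b \<in> set s. b \<in> set post \<longleftrightarrow> b \<in> set post'"
    and "\<forall>b \<in> set s. c b = c' b \<or> b \<in> set pre \<or> (count_list s b = 1 \<and> b \<notin> set post)"
  shows "nf_seg c pre s post = nf_seg c' pre' s post'"
  using assms
proof (induction s arbitrary: pre pre')
  case (Cons b s)
  have "nf_occ c b (b \<in> set pre) (b \<in> set s \<or> b \<in> set post) =
      nf_occ c' b (b \<in> set pre') (b \<in> set s \<or> b \<in> set post')"
    using Cons.prems by (auto simp: nf_occ_def count_list_0_iff)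
  moreover have "nf_seg c (pre @ [b]) s post = nf_seg c' (pre' @ [b]) s post'"
    using Cons.prems by (intro Cons.IH) (auto split: if_splits)
  ultimately show ?case by simp
qed simp

lemma filter_nf_seg: "filter P (nf_seg c pre s post) = nf_seg c (filter P pre) (filter P s) (filter P post)"
proof (induction s arbitrary: pre)
  case (Cons b s)
  have "set (nf_occ c b p q) \<subseteq> {b}" for p q
    by (auto simp: nf_occ_def)
  then have "filter P (nf_occ c b p q) = (if P b then nf_occ c b p q else [])" for p q
    by (auto intro!: filter_True filter_False)
  with Cons show ?case by simp
qed simp

lemma nf_seg_nonempty: "s \<noteq> [] \<Longrightarrow> nf_seg c pre s [] \<noteq> []"
proof (induction s arbitrary: pre)
  case (Cons b s)
  show ?case
  proof (cases "s = []")
    case True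
    then show ?thesis by (simp add: nf_occ_def)
  qed (simp add: Cons.IH)
qed simp

lemma nf_seg_replicate_seen:
  "x \<in> set pre \<Longrightarrow> nf_seg c pre (replicate k x) post = (if k \<noteq> 0 \<and> x \<notin> set post then [x] else [])"
  by (induction k arbitrary: pre) (auto simp: nf_occ_def)

lemma nf_seg_replicate_unseen:
  assumes "1 \<le> k" and "x \<notin> set pre"
  shows "nf_seg c pre (replicate k x) post =
    (if k = 1 \<and> x \<notin> set post then [x] else replicate (c x - 1) x) @ (if 2 \<le> k \<and> x \<notin> set post then [x] else [])"
proof -
  obtain j where "k = Suc j" using assms(1) by (cases k) auto
  then show ?thesis using assms by (auto simp: nf_occ_def nf_seg_replicate_seen)
qed

lemma nf_seg_replicate:
  "nf_seg c [] (replicate k x) [] = (if k = 0 then [] else if k = 1 then [x] else replicate (c x - 1) x @ [x])"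
  using nf_seg_replicate_unseen[of k x "[]" c "[]"] by (cases k) auto

lemma nf_seg_replicate_count_eq:
  assumes "min (count_list u x) 2 = min (count_list v x) 2"
  shows "nf_seg c [] (replicate (count_list u x) x) [] = nf_seg c [] (replicate (count_list v x) x) []"
  using assms by (auto simp: nf_seg_replicate min_def split: if_splits)

lemma nf_seg_seen_pair:
  assumes "x \<noteq> y" and "set r \<subseteq> {x, y}" and "x \<in> set pre" and "y \<in> set pre"
  shows "nf_seg c pre r [] = (if x \<in> set r \<and> y \<in> set r then (if last r = x then [y, x] else [x, y])
      else if x \<in> set r then [x] else if y \<in> set r then [y] else [])"
  using assms
proof (induction r arbitrary: pre)
  case (Cons b r)
  have "set r \<subseteq> {x, y}" using Cons.prems(2) by simp
  then have "r \<noteq> [] \<Longrightarrow> last r = x \<or> last r = y"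
    using last_in_set[of r] by blast
  moreover have "b \<in> set pre" using Cons.prems by auto
  ultimately show ?case using Cons by (auto simp: nf_occ_def)
qed simp

lemma split_pair_word:
  assumes "set p \<subseteq> {x, y}" and "x \<noteq> y" and "p \<noteq> []" and "hd p = x" and "y \<in> set p"
  obtains k r where "1 \<le> k" and "p = replicate k x @ y # r"
proof -
  have "\<exists>k r. 1 \<le> k \<and> p = replicate k x @ y # r"
    using assms
  proof (induction p)
    case (Cons b p)
    show ?case
    proof (cases "hd p = x \<and> p \<noteq> []")
      case True
      then obtain k r where "p = replicate k x @ y # r"
        using Cons by auto
      then show ?thesis using Cons.prems by (intro exI[of _ "Suc k"]) auto
    next
      case False
      then have "p = y # tl p" using Cons.prems by (cases p) auto
      then show ?thesis using Cons.prems by (intro exI[of _ 1] exI[of _ "tl p"]) auto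
    qed
  qed simp
  then show ?thesis using that by blast
qed

lemma nf_seg_pair:
  assumes "x \<noteq> y" and "set p \<subseteq> {x, y}" and "p \<noteq> []" and "hd p = x" and "y \<in> set p"
  shows "nf_seg c [] p [] =
    (if 2 \<le> count_list p x then replicate (c x - 1) x else [x])
    @ (if 2 \<le> count_list p x \<and> \<not> occurs_before y x p then [x] else [])
    @ (if 2 \<le> count_list p y then replicate (c y - 1) y else [y])
    @ (if occurs_before y x p \<and> 2 \<le> count_list p y then (if last p = x then [y, x] else [x, y])
       else if occurs_before y x p then [x] else if 2 \<le> count_list p y then [y] else [])"
proof -
  obtain k r where k: "1 \<le> k" and p: "p = replicate k x @ y # r"
    using split_pair_word[OF assms(2,1,3,4,5)] .
  have r: "set r \<subseteq> {x, y}" using assms(2) p by auto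
  have counts: "count_list p x = k + count_list r x" "count_list p y = 1 + count_list r y"
    using p assms(1) by (simp_all add: count_list_replicate)
  have before: "occurs_before y x p \<longleftrightarrow> x \<in> set r"
    using p assms(1)
    by (auto simp: occurs_before_append not_occurs_before_replicate dest: occurs_before_in_set)
  have "nf_seg c [] p [] = nf_seg c [] (replicate k x) (y # r) @ nf_seg c (replicate k x) (y # r) []"
    using p nf_seg_append[of c "[]" "replicate k x" "y # r" "[]"] by simp
  also have "\<dots> = ((if k = 1 \<and> x \<notin> set r then [x] else replicate (c x - 1) x)
      @ (if 2 \<le> k \<and> x \<notin> set r then [x] else []))
      @ (if y \<in> set r then replicate (c y - 1) y else [y])
      @ (if x \<in> set r \<and> y \<in> set r then (if last r = x then [y, x] else [x, y])
         else if x \<in> set r then [x] else if y \<in> set r then [y] else [])"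
    using nf_seg_replicate_unseen[OF k, of x "[]" c "y # r"] nf_seg_seen_pair[OF assms(1) r, of "replicate k x @ [y]" c]
      k assms(1) by (simp add: nf_occ_def)
  finally show ?thesis
    unfolding before counts using k p
    by (cases "r = []"; cases "count_list r x"; cases "count_list r y") (auto simp: count_list_0_iff)
qed

lemma list_eq_if_filter_pairs_eq:
  assumes "\<forall>x y. filter (\<lambda>z. z = x \<or> z = y) u = filter (\<lambda>z. z = x \<or> z = y) v"
  shows "u = v"
  using assms
proof (induction u arbitrary: v)
  case Nil
  then show ?case by (cases v) (auto dest: spec[of _ "hd v"])
next
  case (Cons a u)
  obtain b v' where v: "v = b # v'"
    using Cons.prems by (cases v) (auto dest!: spec[of _ a])
  have "a = b"
    using Cons.prems[rule_format, of a b] v by (simp split: if_splits)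
  moreover have "\<forall>x y. filter (\<lambda>z. z = x \<or> z = y) u = filter (\<lambda>z. z = x \<or> z = y) v'"
    using Cons.prems v \<open>a = b\<close> by (auto split: if_splits)
  ultimately show ?case using Cons.IH v by simp
qed

lemma filter_pair_eq_replicate:
  "x = y \<or> y \<notin> set w \<Longrightarrow> filter (\<lambda>z. z = x \<or> z = y) w = replicate (count_list w x) x"
  by (induction w) auto

lemma count_list_filter: "P a \<Longrightarrow> count_list (filter P w) a = count_list w a"
  by (induction w) auto

lemma nf_seg_filter_pair_eq_hd:
  fixes x y :: nat
  defines "P \<equiv> \<lambda>z. z = x \<or> z = y"
  assumes "x \<noteq> y" and "y \<in> set u" and "y \<in> set v"
    and "hd (filter P u) = x" and "hd (filter P v) = x"
    and "min (count_list u x) 2 = min (count_list v x) 2"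
    and "min (count_list u y) 2 = min (count_list v y) 2"
    and "last (filter P u) = last (filter P v)"
    and "occurs_before y x u \<longleftrightarrow> occurs_before y x v"
  shows "nf_seg c [] (filter P u) [] = nf_seg c [] (filter P v) []"
proof -
  have "nf_seg c [] (filter P w) [] =
    (if 2 \<le> count_list w x then replicate (c x - 1) x else [x])
    @ (if 2 \<le> count_list w x \<and> \<not> occurs_before y x w then [x] else [])
    @ (if 2 \<le> count_list w y then replicate (c y - 1) y else [y])
    @ (if occurs_before y x w \<and> 2 \<le> count_list w y then (if last (filter P w) = x then [y, x] else [x, y])
       else if occurs_before y x w then [x] else if 2 \<le> count_list w y then [y] else [])"
    if "y \<in> set w" and "hd (filter P w) = x" for w
  proof -
    have "set (filter P w) \<subseteq> {x, y}" and "y \<in> set (filter P w)"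
      using that(1) by (auto simp: P_def)
    then have "filter P w \<noteq> []" by (metis empty_iff empty_set)
    show ?thesis
      using nf_seg_pair[OF assms(2) \<open>set (filter P w) \<subseteq> {x, y}\<close> \<open>filter P w \<noteq> []\<close> that(2)
          \<open>y \<in> set (filter P w)\<close>]
      by (simp add: P_def count_list_filter occurs_before_filter)
  qed
  then show ?thesis
    using assms(3-10) by (simp add: min_def split: if_splits)
qed

lemma nf_seg_filter_pair_eq:
  fixes x y :: nat
  defines "P \<equiv> \<lambda>z. z = x \<or> z = y"
  assumes "x \<noteq> y" and "x \<in> set u" and "y \<in> set u"
    and "\<And>a. a \<in> set u \<longleftrightarrow> a \<in> set v"
    and "min (count_list u x) 2 = min (count_list v x) 2"
    and "min (count_list u y) 2 = min (count_list v y) 2"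
    and "hd (filter P u) = hd (filter P v)" and "last (filter P u) = last (filter P v)"
    and "occurs_before y x u \<longleftrightarrow> occurs_before y x v" and "occurs_before x y u \<longleftrightarrow> occurs_before x y v"
  shows "nf_seg c [] (filter P u) [] = nf_seg c [] (filter P v) []"
proof -
  have swap: "(\<lambda>z. z = y \<or> z = x) = P" by (auto simp: P_def)
  have "hd (filter P u) \<in> set (filter P u)"
    using assms(4) by (intro hd_in_set) (auto simp: P_def filter_empty_conv)
  then consider "hd (filter P u) = x" | "hd (filter P u) = y" by (auto simp: P_def)
  then show ?thesis
  proof cases
    case 1
    then show ?thesis
      using assms(2-11) unfolding P_def by (intro nf_seg_filter_pair_eq_hd) auto
  next
    case 2
    have "nf_seg c [] (filter (\<lambda>z. z = y \<or> z = x) u) [] = nf_seg c [] (filter (\<lambda>z. z = y \<or> z = x) v) []"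
      by (rule nf_seg_filter_pair_eq_hd[of y x]) (use 2 assms(2-11) in \<open>auto simp: swap\<close>)
    then show ?thesis unfolding swap .
  qed
qed

lemma nf_seg_eq_if_invariants:
  assumes counts: "\<forall>x. min (count_list u x) 2 = min (count_list v x) 2"
    and firsts: "\<forall>x y. hd (filter (\<lambda>z. z = x \<or> z = y) u) = hd (filter (\<lambda>z. z = x \<or> z = y) v)"
    and lasts: "\<forall>x y. last (filter (\<lambda>z. z = x \<or> z = y) u) = last (filter (\<lambda>z. z = x \<or> z = y) v)"
    and before: "\<forall>x y. x \<noteq> y \<longrightarrow> (occurs_before y x u \<longleftrightarrow> occurs_before y x v)"
  shows "nf_seg c [] u [] = nf_seg c [] v []"
proof (rule list_eq_if_filter_pairs_eq, intro allI)
  fix x y :: nat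
  let ?P = "\<lambda>z. z = x \<or> z = y"
  have set_eq: "a \<in> set u \<longleftrightarrow> a \<in> set v" for a
  proof -
    have "count_list u a = 0 \<longleftrightarrow> count_list v a = 0"
      using counts[rule_format, of a] by (auto simp: min_def split: if_splits)
    then show ?thesis by (simp add: count_list_0_iff)
  qed
  consider "x = y \<or> y \<notin> set u" | "x \<notin> set u" | "x \<noteq> y" "x \<in> set u" "y \<in> set u"
    by blast
  then have "nf_seg c [] (filter ?P u) [] = nf_seg c [] (filter ?P v) []"
  proof cases
    case 1
    then have "filter ?P w = replicate (count_list w x) x" if "w = u \<or> w = v" for w
      using that set_eq filter_pair_eq_replicate[of x y w] by blast
    then show ?thesis
      using nf_seg_replicate_count_eq[OF counts[rule_format, of x]] by simp
  next
    case 2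
    then have "filter ?P w = replicate (count_list w y) y" if "w = u \<or> w = v" for w
      using that set_eq filter_pair_eq_replicate[of y x w] by (metis (no_types, lifting) filter_cong)
    then show ?thesis
      using nf_seg_replicate_count_eq[OF counts[rule_format, of y]] by simp
  next
    case 3
    then show ?thesis
      using set_eq counts[rule_format, of x] counts[rule_format, of y] firsts[rule_format, of x y]
        lasts[rule_format, of x y] before[rule_format, of x y] before[rule_format, of y x]
      by (intro nf_seg_filter_pair_eq) auto
  qed
  then show "filter ?P (nf_seg c [] u []) = filter ?P (nf_seg c [] v [])"
    by (simp add: filter_nf_seg)
qed

lemma derivable_instance:
  "(u, v) \<in> Ax \<Longrightarrow> \<forall>x. \<sigma> x \<noteq> [] \<Longrightarrow> derivable Ax (substw \<sigma> u) (substw \<sigma> v)"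
  by (rule derivable.subst[OF derivable.ax])

lemma derivable_context: "derivable Ax u v \<Longrightarrow> derivable Ax (p @ u @ q) (p @ v @ q)"
proof -
  assume "derivable Ax u v"
  then have "derivable Ax (u @ q) (v @ q)"
    by (cases "q = []") (auto intro: derivable.multr)
  then show ?thesis
    by (cases "p = []") (auto intro: derivable.multl)
qed

lemma replicate_pred_snoc: "1 \<le> k \<Longrightarrow> replicate (k - 1) a @ [a] = replicate k a"
  by (cases k) (simp_all add: replicate_append_same)

lemma substw_replicate: "\<sigma> x = [a] \<Longrightarrow> substw \<sigma> (replicate k x) = replicate k a"
  by (induction k) (auto simp: substw_def)

text \<open>Moving an occurrence of \<open>a\<close> to the left, next to an earlier one; this is where the identities
  \<open>x\<^sup>2yx \<approx> xyx\<^sup>2\<close> and \<open>xyxzx \<approx> x\<^sup>2yzx\<close> are used.\<close>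

lemma derivable_move_occurrence:
  "derivable (Sigma_mn m n) ([a] @ q @ [a] @ r @ [a]) ([a, a] @ q @ r @ [a])"
proof (cases "q = []")
  case True
  then show ?thesis by (auto intro: derivable.refl)
next
  case False
  show ?thesis
  proof (cases "r = []")
    case True
    have "derivable (Sigma_mn m n) (substw (\<lambda>i. if i = 0 then [a] else q) [0, 0, 1, 0])
        (substw (\<lambda>i. if i = 0 then [a] else q) [0, 1, 0, 0])"
      using \<open>q \<noteq> []\<close> by (intro derivable_instance) (auto simp: Sigma_mn_def)
    then show ?thesis using True by (auto simp: substw_def intro: derivable.sym)
  next
    case False
    have "derivable (Sigma_mn m n) (substw (\<lambda>i. if i = 0 then [a] else if i = 1 then q else r) [0, 1, 0, 2, 0])
        (substw (\<lambda>i. if i = 0 then [a] else if i = 1 then q else r) [0, 0, 1, 2, 0])"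
      using \<open>q \<noteq> []\<close> False by (intro derivable_instance) (auto simp: Sigma_mn_def)
    then show ?thesis by (simp add: substw_def)
  qed
qed

lemma derivable_move_occurrence_power:
  assumes "2 \<le> k"
  shows "derivable (Sigma_mn m n) (replicate (k - 1) a @ q @ [a] @ r @ [a]) (replicate k a @ q @ r @ [a])"
proof -
  obtain j where k: "k = Suc (Suc j)" using assms by (metis add_2_eq_Suc le_Suc_ex)
  have "replicate (k - 1) a = replicate j a @ [a]"
    unfolding k by (simp add: replicate_append_same)
  moreover have "replicate k a = replicate j a @ [a, a]"
    unfolding k by (induction j) auto
  ultimately show ?thesis
    using derivable_context[OF derivable_move_occurrence[of m n a q r], of "replicate j a" "[]"] by simp
qed

text \<open>Lowering an exponent by the period \<open>m\<close> once it reaches \<open>m + n\<close>; this is where the identities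
  \<open>x\<^bsup>m+n\<^esup> \<approx> x\<^sup>n\<close> and \<open>x\<^bsup>m+n-1\<^esup>yx \<approx> x\<^bsup>n-1\<^esup>yx\<close> are used.\<close>

lemma derivable_reduce_power:
  assumes "1 \<le> m" and "2 \<le> n" and "m + n \<le> k"
  shows "derivable (Sigma_mn m n) (replicate (k - 1) a @ q @ [a]) (replicate (k - 1 - m) a @ q @ [a])"
proof (cases "k = m + n \<and> q = []")
  case True
  have "derivable (Sigma_mn m n) (substw (\<lambda>_. [a]) (replicate (m + n) 0)) (substw (\<lambda>_. [a]) (replicate n 0))"
    by (intro derivable_instance) (auto simp: Sigma_mn_def)
  moreover have "replicate (k - 1) a @ [a] = replicate (m + n) a" and "replicate (k - 1 - m) a @ [a] = replicate n a"
    using True assms replicate_pred_snoc[of "m + n" a] replicate_pred_snoc[of n a] by simp_all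
  ultimately show ?thesis using True by (simp add: substw_replicate)
next
  case False
  define p where "p = replicate (k - (m + n)) a @ q"
  have "p \<noteq> []" using False assms(3) by (auto simp: p_def)
  then have "derivable (Sigma_mn m n) (substw (\<lambda>i. if i = 0 then [a] else p) (replicate (m + n - 1) 0 @ [1, 0]))
      (substw (\<lambda>i. if i = 0 then [a] else p) (replicate (n - 1) 0 @ [1, 0]))"
    by (intro derivable_instance) (auto simp: Sigma_mn_def)
  then have "derivable (Sigma_mn m n) (replicate (m + n - 1) a @ p @ [a]) (replicate (n - 1) a @ p @ [a])"
    by (simp add: substw_def substw_replicate[unfolded substw_def])
  moreover have "replicate (m + n - 1) a @ p = replicate (k - 1) a @ q"
    and "replicate (n - 1) a @ p = replicate (k - 1 - m) a @ q"
    using assms unfolding p_def by (simp_all add: replicate_add[symmetric])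
  ultimately show ?thesis by (metis append.assoc)
qed

lemma split_list_two_occurrences:
  assumes "2 \<le> count_list w a"
  obtains w1 w2 w3 where "w = w1 @ a # w2 @ a # w3" and "a \<notin> set w1" and "a \<notin> set w3"
proof -
  have "a \<in> set w" using assms by (metis count_notin not_numeral_le_zero)
  then obtain w1 r where w: "w = w1 @ a # r" "a \<notin> set w1" by (metis split_list_first)
  then have "count_list r a \<ge> 1" using assms by simp
  then have "a \<in> set r" by (metis count_notin not_one_le_zero)
  then obtain w2 w3 where "r = w2 @ a # w3" "a \<notin> set w3" by (metis split_list_last)
  then show ?thesis using that w by blast
qed

lemma nf_seg_snoc:
  assumes "count_list w a \<le> 1"
  shows "nf_seg (count_list (w @ [a])) [] (w @ [a]) [] = nf_seg (count_list w) [] w [] @ [a]"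
proof (cases "a \<in> set w")
  case False
  have "nf_seg (count_list (w @ [a])) [] w [a] = nf_seg (count_list w) [] w []"
    by (rule nf_seg_cong) (use False in auto)
  then show ?thesis using False by (simp add: nf_seg_append nf_occ_def)
next
  case True
  then obtain w1 w3 where w: "w = w1 @ a # w3" and "a \<notin> set w1" by (metis split_list_first)
  then have "a \<notin> set w3" using assms by (simp add: count_list_0_iff)
  have "nf_seg (count_list (w @ [a])) [] w1 (a # w3 @ [a]) = nf_seg (count_list w) [] w1 (a # w3)"
    by (rule nf_seg_cong) (use w \<open>a \<notin> set w1\<close> in auto)
  moreover have "nf_seg (count_list (w @ [a])) (w1 @ [a]) w3 [a] = nf_seg (count_list w) (w1 @ [a]) w3 []"
    by (rule nf_seg_cong) (use \<open>a \<notin> set w3\<close> in auto)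
  ultimately show ?thesis
    using nf_seg_split_at[of "count_list (w @ [a])" "[]" w1 a "w3 @ [a]" "[]"]
      nf_seg_split_at[of "count_list w" "[]" w1 a w3 "[]"] w \<open>a \<notin> set w1\<close> \<open>a \<notin> set w3\<close>
    by (simp add: nf_occ_def nf_seg_append)
qed

lemma derivable_nf_seg_snoc:
  assumes "2 \<le> count_list w a"
  shows "derivable (Sigma_mn m n) (nf_seg (count_list w) [] w [] @ [a]) (nf_seg (count_list (w @ [a])) [] (w @ [a]) [])"
proof -
  obtain w1 w2 w3 where w: "w = w1 @ a # w2 @ a # w3" and "a \<notin> set w1" and "a \<notin> set w3"
    using split_list_two_occurrences[OF assms] .
  let ?c = "count_list (w @ [a])" and ?c' = "count_list w"
  define p where "p = nf_seg ?c' [] w1 (a # w2 @ a # w3)"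
  define q where "q = nf_seg ?c' (w1 @ [a]) w2 (a # w3)"
  define r where "r = nf_seg ?c' (w1 @ a # w2 @ [a]) w3 []"
  have "nf_seg ?c' [] w [] = p @ replicate (?c' a - 1) a @ q @ [a] @ r"
    using nf_seg_split_at2[of ?c' "[]" w1 a w2 w3 "[]"] w \<open>a \<notin> set w1\<close> \<open>a \<notin> set w3\<close>
    by (simp add: nf_occ_def p_def q_def r_def)
  moreover have "nf_seg ?c [] (w @ [a]) [] = p @ replicate (?c a - 1) a @ q @ r @ [a]"
  proof -
    have "nf_seg ?c [] w1 (a # w2 @ a # w3 @ [a]) = p"
      unfolding p_def by (rule nf_seg_cong) (use w \<open>a \<notin> set w1\<close> in auto)
    moreover have "nf_seg ?c (w1 @ [a]) w2 (a # w3 @ [a]) = q"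
      unfolding q_def by (rule nf_seg_cong) auto
    moreover have "nf_seg ?c (w1 @ a # w2 @ [a]) w3 [a] = r"
      unfolding r_def by (rule nf_seg_cong) (use w \<open>a \<notin> set w3\<close> in auto)
    ultimately show ?thesis
      using nf_seg_split_at2[of ?c "[]" w1 a w2 "w3 @ [a]" "[]"] w \<open>a \<notin> set w1\<close> \<open>a \<notin> set w3\<close>
      by (simp add: nf_occ_def nf_seg_append)
  qed
  ultimately show ?thesis
    using derivable_context[OF derivable_move_occurrence_power[OF assms, where m = m and n = n
          and a = a and q = q and r = r], of p "[]"]
    by simp
qed

lemma derivable_nf_seg:
  "w \<noteq> [] \<Longrightarrow> derivable (Sigma_mn m n) w (nf_seg (count_list w) [] w [])"
proof (induction w rule: rev_induct)
  case (snoc a w)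
  show ?case
  proof (cases "w = []")
    case True
    then show ?thesis by (simp add: nf_occ_def derivable.refl)
  next
    case False
    have "derivable (Sigma_mn m n) (w @ [a]) (nf_seg (count_list w) [] w [] @ [a])"
      using snoc.IH[OF False] by (rule derivable.multr) simp
    moreover have "derivable (Sigma_mn m n) (nf_seg (count_list w) [] w [] @ [a])
        (nf_seg (count_list (w @ [a])) [] (w @ [a]) [])"
    proof (cases "count_list w a \<le> 1")
      case True
      then show ?thesis by (simp add: nf_seg_snoc derivable.refl)
    qed (simp add: derivable_nf_seg_snoc)
    ultimately show ?thesis by (rule derivable.trans)
  qed
qed simp

text \<open>\<open>canon_exp m n k\<close> is the least \<open>k'\<close> with \<open>x\<^sup>k = x\<^bsup>k'\<^esup>\<close> in the monogenic semigroup of index \<open>n\<close> and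
  period \<open>m\<close>.\<close>

definition canon_exp :: "nat \<Rightarrow> nat \<Rightarrow> nat \<Rightarrow> nat" where
  "canon_exp m n k = (if k < n then k else n + (k - n) mod m)"

lemma canon_exp_eq:
  assumes "min k n = min k' n" and "k mod m = k' mod m"
  shows "canon_exp m n k = canon_exp m n k'"
proof (cases "k < n")
  case False
  then have "n \<le> k" "n \<le> k'" using assms(1) by (auto simp: min_def split: if_splits)
  then obtain j j' where j: "k = n + j" "k' = n + j'" by (metis le_add_diff_inverse)
  then have "j mod m = j' mod m"
    using assms(2) unfolding nat_mod_eq_iff by (metis add.assoc add_left_cancel)
  then show ?thesis using j by (simp add: canon_exp_def)
qed (use assms(1) in \<open>auto simp: min_def split: if_splits\<close>)

lemma canon_exp_minus_period: "m + n \<le> k \<Longrightarrow> canon_exp m n (k - m) = canon_exp m n k"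
proof -
  assume "m + n \<le> k"
  then have "k - n = (k - m - n) + m" by simp
  then have "(k - n) mod m = (k - m - n) mod m" by simp
  then show ?thesis using \<open>m + n \<le> k\<close> by (simp add: canon_exp_def)
qed

lemma derivable_nf_seg_reduce_exponent:
  assumes "1 \<le> m" and "2 \<le> n" and "2 \<le> count_list w a" and "m + n \<le> c a"
  shows "derivable (Sigma_mn m n) (nf_seg c [] w []) (nf_seg (c(a := c a - m)) [] w [])"
proof -
  obtain w1 w2 w3 where w: "w = w1 @ a # w2 @ a # w3" and "a \<notin> set w1" and "a \<notin> set w3"
    using split_list_two_occurrences[OF assms(3)] .
  let ?c = "c(a := c a - m)"
  define p where "p = nf_seg c [] w1 (a # w2 @ a # w3)"
  define q where "q = nf_seg c (w1 @ [a]) w2 (a # w3)"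
  define r where "r = nf_seg c (w1 @ a # w2 @ [a]) w3 []"
  have "nf_seg c [] w [] = p @ replicate (c a - 1) a @ q @ [a] @ r"
    using nf_seg_split_at2[of c "[]" w1 a w2 w3 "[]"] w \<open>a \<notin> set w1\<close> \<open>a \<notin> set w3\<close>
    by (simp add: nf_occ_def p_def q_def r_def)
  moreover have "nf_seg ?c [] w [] = p @ replicate (c a - 1 - m) a @ q @ [a] @ r"
  proof -
    have "nf_seg ?c [] w1 (a # w2 @ a # w3) = p"
      unfolding p_def by (rule nf_seg_cong) (use w \<open>a \<notin> set w1\<close> in auto)
    moreover have "nf_seg ?c (w1 @ [a]) w2 (a # w3) = q"
      unfolding q_def by (rule nf_seg_cong) auto
    moreover have "nf_seg ?c (w1 @ a # w2 @ [a]) w3 [] = r"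
      unfolding r_def by (rule nf_seg_cong) (use w \<open>a \<notin> set w3\<close> in auto)
    ultimately show ?thesis
      using nf_seg_split_at2[of ?c "[]" w1 a w2 w3 "[]"] w \<open>a \<notin> set w1\<close> \<open>a \<notin> set w3\<close>
      by (simp add: nf_occ_def)
  qed
  ultimately show ?thesis
    using derivable_context[OF derivable_reduce_power[OF assms(1,2,4), of a q], of p r] by simp
qed

lemma derivable_nf_seg_canon_exp:
  assumes "1 \<le> m" and "2 \<le> n" and "w \<noteq> []" and "\<forall>a. 2 \<le> count_list w a \<longrightarrow> 2 \<le> c a"
  shows "derivable (Sigma_mn m n) (nf_seg c [] w []) (nf_seg (canon_exp m n \<circ> c) [] w [])"
  using assms(4)
proof (induction "\<Sum>a\<in>set w. c a" arbitrary: c rule: less_induct)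
  case less
  show ?case
  proof (cases "\<exists>a. 2 \<le> count_list w a \<and> m + n \<le> c a")
    case True
    then obtain a where a: "2 \<le> count_list w a" "m + n \<le> c a" by blast
    let ?c = "c(a := c a - m)"
    have "a \<in> set w" using a(1) by (metis count_notin not_numeral_le_zero)
    then have "(\<Sum>b\<in>set w. ?c b) < (\<Sum>b\<in>set w. c b)"
      by (intro sum_strict_mono_ex1) (use a assms(1) in auto)
    moreover have "\<forall>b. 2 \<le> count_list w b \<longrightarrow> 2 \<le> ?c b" using less.prems a assms(2) by auto
    ultimately have "derivable (Sigma_mn m n) (nf_seg ?c [] w []) (nf_seg (canon_exp m n \<circ> ?c) [] w [])"
      using less.hyps by blast
    moreover have "canon_exp m n \<circ> ?c = canon_exp m n \<circ> c"
      using canon_exp_minus_period[OF a(2)] by auto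
    ultimately show ?thesis
      using derivable_nf_seg_reduce_exponent[where c = c, OF assms(1,2) a] by (metis derivable.trans)
  next
    case False
    have "nf_seg c [] w [] = nf_seg (canon_exp m n \<circ> c) [] w []"
    proof (rule nf_seg_cong)
      show "\<forall>b\<in>set w. c b = (canon_exp m n \<circ> c) b \<or> b \<in> set [] \<or> (count_list w b = 1 \<and> b \<notin> set [])"
      proof
        fix b assume "b \<in> set w"
        then have "count_list w b \<noteq> 0" by (simp add: count_list_0_iff)
        then show "c b = (canon_exp m n \<circ> c) b \<or> b \<in> set [] \<or> (count_list w b = 1 \<and> b \<notin> set [])"
          using False by (cases "2 \<le> count_list w b") (auto simp: canon_exp_def)
      qed
    qed auto
    then show ?thesis using nf_seg_nonempty[OF assms(3)] by (simp add: derivable.refl)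
  qed
qed

lemma derivable_nf:
  assumes "1 \<le> m" and "2 \<le> n" and "w \<noteq> []"
  shows "derivable (Sigma_mn m n) w (nf_seg (canon_exp m n \<circ> count_list w) [] w [])"
  using derivable.trans[OF derivable_nf_seg[OF assms(3)] derivable_nf_seg_canon_exp[OF assms]] by simp

section \<open>Completeness\<close>

lemma min_eq_min_if_le: "k \<le> n \<Longrightarrow> min a n = min b n \<Longrightarrow> min a k = min b (k :: nat)"
  by (auto simp: min_def split: if_splits)

lemma derivable_if_satisfies:
  assumes "1 \<le> m" and "2 \<le> n" and "u \<noteq> []" and "v \<noteq> []"
    and "satisfies (prod_carrier m n) (prod_mult m n) u v"
  shows "derivable (Sigma_mn m n) u v"
proof -
  have sat: "satisfies {0..<m} (Zm_mult m) u v" "satisfies {0..n} (NnI_mult n) u v"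
    "satisfies UNIV L2I_mult u v" "satisfies UNIV R2I_mult u v" "satisfies UNIV A0I_mult u v"
    using assms(5) satisfies_prod_carrier_iff[OF assms(1,3,4)] by simp_all
  have mod_m: "\<forall>x. count_list u x mod m = count_list v x mod m"
    using sat(1) Zm_satisfies_iff[OF assms(1,3,4)] by simp
  have min_n: "\<forall>x. min (count_list u x) n = min (count_list v x) n"
    using sat(2) NnI_satisfies_iff[OF _ assms(3,4)] assms(2) by simp
  have "canon_exp m n \<circ> count_list u = canon_exp m n \<circ> count_list v"
    using canon_exp_eq[OF min_n[rule_format] mod_m[rule_format]] by (simp add: comp_def)
  moreover have "nf_seg c [] u [] = nf_seg c [] v []" for c
  proof (rule nf_seg_eq_if_invariants; intro allI impI)
    show "min (count_list u x) 2 = min (count_list v x) 2" for x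
      using min_eq_min_if_le[OF assms(2) min_n[rule_format]] .
    show "hd (filter (\<lambda>z. z = x \<or> z = y) u) = hd (filter (\<lambda>z. z = x \<or> z = y) v)" for x y
      by (rule L2I_satisfies_hd_filter[OF sat(3) assms(3,4)])
    show "last (filter (\<lambda>z. z = x \<or> z = y) u) = last (filter (\<lambda>z. z = x \<or> z = y) v)" for x y
      by (rule R2I_satisfies_last_filter[OF sat(4) assms(3,4)])
    show "occurs_before y x u \<longleftrightarrow> occurs_before y x v" if "x \<noteq> y" for x y
      by (rule A0I_satisfies_occurs_before[OF sat(5) assms(3,4) that])
  qed
  ultimately have "derivable (Sigma_mn m n) (nf_seg (canon_exp m n \<circ> count_list u) [] u []) v"
    using derivable.sym[OF derivable_nf[OF assms(1,2,4)]] by simp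
  then show ?thesis
    by (rule derivable.trans[OF derivable_nf[OF assms(1-3)]])
qed

theorem proposition6p5:
  fixes m n :: nat and u v :: word
  assumes "m \<ge> 1" and "n \<ge> 2" and "u \<noteq> []" and "v \<noteq> []"
  shows "satisfies (prod_carrier m n) (prod_mult m n) u v \<longleftrightarrow> derivable (Sigma_mn m n) u v"
  using derivable_if_satisfies[OF assms] satisfies_if_derivable_Sigma_mn[OF assms(1,2)] by blast

end
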